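(* Let $A\in\mathbb{T}^{m\times n}$, $B\in\mathbb{T}^{m\times q}$, $P\in\mathbb{R}^{q\times n}$ row-stochastic, with every row of $B$, every column of $A$ and every row of $A$ containing at least one finite entry. Let $F=A^\sharp\circ B\circ P$ and $F^\ast=(B^\top)^\sharp\circ P\circ A^\top$. Then: (i) $\operatorname{cond}_{\mathbb{R}}(F)=\operatorname{cond}(F^\ast)$, i.e. the condition number of $\mathscr{P}_{\mathbb{R}}(F)$ equals the condition number of $\mathscr{P}(F^\ast)$; (ii) at least one of the problems $\mathscr{P}(F^\ast)$ and $\mathscr{P}_{\mathbb{R}}(F)$ is feasible; (iii) at most one of the problems $\mathscr{P}_{\mathbb{R}}(F)$ and $\mathscr{P}_{\mathbb{R}}(F^\ast)$ is feasible.
   Context: $\mathbb{T}=\mathbb{R}\cup\{-\infty\}$; $\mathbb{0}$ is the vector with all entries $-\infty$. For $C\in\mathbb{T}^{r\times s}$, $z\in\mathbb{T}^s$: $(C\odot z)_i=\max_k(C_{ik}+z_k)$; the adjoint is $C^\sharp(y)_j=\min_i(-C_{ij}+y_i)$ for $y\in(\mathbb{R}\cup\{\pm\infty\})^r$, with $(+\infty)+(-\infty)=+\infty$. $Pz$ is the usual product with $0\cdot(-\infty)=0$. So $F(x)=A^\sharp(B\odot(Px))$ is a self-map of $\mathbb{T}^n$ and $F^\ast(y)=(B^\top)^\sharp(P(A^\top\odot y))$ is a self-map of $\mathbb{T}^m$. Order is entrywise; $y\ll z$ means $y_i<z_i$ for all $i$; $\|u\|_\infty=\max_i|u_i|$;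 for $u\in\mathbb{R}^d$, $u+G$ is the map $x\mapsto u+G(x)$. For a self-map $G$ of $\mathbb{T}^d$: $\mathscr{P}(G)$ is the problem "does there exist $x\in\mathbb{T}^d$, $x\ne\mathbb{0}$, $x\le G(x)$?"; $\mathscr{P}_{\mathbb{R}}(G)$ is "does there exist $x\in\mathbb{R}^d$ with $x\ll G(x)$?". Feasible means such $x$ exists. Condition numbers: if $\mathscr{P}(G)$ is feasible, $\operatorname{cond}(G)=(\inf\{\|u\|_\infty: u\in\mathbb{R}^d,\ \mathscr{P}(u+G)\text{ infeasible}\})^{-1}$; otherwise $\operatorname{cond}(G)=(\inf\{\|u\|_\infty: u\in\mathbb{R}^d,\ \mathscr{P}(u+G)\text{ feasible}\})^{-1}$, with $\inf\emptyset=+\infty$, $0^{-1}=+\infty$, $(+\infty)^{-1}=0$. $\operatorname{cond}_{\mathbb{R}}(G)$ is defined identically with $\mathscr{P}_{\mathbb{R}}$ in place of $\mathscr{P}$. *)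

theory Defs
  imports "HOL-Analysis.Analysis"
begin

text \<open>Tropical semiring T = R with -infinity, embedded in ereal (the value +infinity
  only appears as an output of the adjoint). Vectors indexed by a finite type.
  ereal conventions: (+inf) + (-inf) = +inf, 0 * (-inf) = 0, inverse 0 = inf, inverse inf = 0.\<close>

definition tvec :: "('d \<Rightarrow> ereal) \<Rightarrow> bool" where
  "tvec x \<longleftrightarrow> (\<forall>i. x i \<noteq> \<infinity>)"

definition tzero :: "'d \<Rightarrow> ereal" where
  "tzero = (\<lambda>_. -\<infinity>)"

definition mp_mult :: "('r \<Rightarrow> 's::finite \<Rightarrow> ereal) \<Rightarrow> ('s \<Rightarrow> ereal) \<Rightarrow> ('r \<Rightarrow> ereal)" where
  "mp_mult C z = (\<lambda>i. Max (range (\<lambda>k. C i k + z k)))"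

definition mp_adj :: "('r::finite \<Rightarrow> 's \<Rightarrow> ereal) \<Rightarrow> ('r \<Rightarrow> ereal) \<Rightarrow> ('s \<Rightarrow> ereal)" where
  "mp_adj C y = (\<lambda>j. Min (range (\<lambda>i. - C i j + y i)))"

definition mtransp :: "('r \<Rightarrow> 's \<Rightarrow> 'a) \<Rightarrow> ('s \<Rightarrow> 'r \<Rightarrow> 'a)" where
  "mtransp C = (\<lambda>i j. C j i)"

text \<open>Usual product P z with 0 * (-inf) = 0\<close>
definition lin_mult :: "('q \<Rightarrow> 'n::finite \<Rightarrow> real) \<Rightarrow> ('n \<Rightarrow> ereal) \<Rightarrow> ('q \<Rightarrow> ereal)" where
  "lin_mult P x = (\<lambda>k. \<Sum>j\<in>UNIV. ereal (P k j) * x j)"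

definition row_stochastic :: "('q \<Rightarrow> 'n::finite \<Rightarrow> real) \<Rightarrow> bool" where
  "row_stochastic P \<longleftrightarrow> (\<forall>k j. 0 \<le> P k j) \<and> (\<forall>k. (\<Sum>j\<in>UNIV. P k j) = 1)"

definition opF :: "('m::finite \<Rightarrow> 'n \<Rightarrow> ereal) \<Rightarrow> ('m \<Rightarrow> 'q::finite \<Rightarrow> ereal)
    \<Rightarrow> ('q \<Rightarrow> 'n::finite \<Rightarrow> real) \<Rightarrow> ('n \<Rightarrow> ereal) \<Rightarrow> ('n \<Rightarrow> ereal)" where
  "opF A B P x = mp_adj A (mp_mult B (lin_mult P x))"

definition opFstar :: "('m::finite \<Rightarrow> 'n \<Rightarrow> ereal) \<Rightarrow> ('m \<Rightarrow> 'q::finite \<Rightarrow> ereal)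
    \<Rightarrow> ('q \<Rightarrow> 'n::finite \<Rightarrow> real) \<Rightarrow> ('m \<Rightarrow> ereal) \<Rightarrow> ('m \<Rightarrow> ereal)" where
  "opFstar A B P y = mp_adj (mtransp B) (lin_mult P (mp_mult (mtransp A) y))"

definition feasP :: "(('d \<Rightarrow> ereal) \<Rightarrow> ('d \<Rightarrow> ereal)) \<Rightarrow> bool" where
  "feasP G \<longleftrightarrow> (\<exists>x. tvec x \<and> x \<noteq> tzero \<and> (\<forall>i. x i \<le> G x i))"

definition feasPR :: "(('d \<Rightarrow> ereal) \<Rightarrow> ('d \<Rightarrow> ereal)) \<Rightarrow> bool" where
  "feasPR G \<longleftrightarrow> (\<exists>x::'d \<Rightarrow> real. \<forall>i. ereal (x i) < G (\<lambda>j. ereal (x j)) i)"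

definition shiftmap :: "('d \<Rightarrow> real) \<Rightarrow> (('d \<Rightarrow> ereal) \<Rightarrow> ('d \<Rightarrow> ereal)) \<Rightarrow> (('d \<Rightarrow> ereal) \<Rightarrow> ('d \<Rightarrow> ereal))" where
  "shiftmap u G = (\<lambda>x i. ereal (u i) + G x i)"

definition supnorm :: "('d::finite \<Rightarrow> real) \<Rightarrow> real" where
  "supnorm u = Max (range (\<lambda>i. \<bar>u i\<bar>))"

text \<open>Condition number w.r.t. a feasibility predicate; Inf {} = inf in ereal,
  inverse 0 = inf, inverse inf = 0.\<close>
definition cond_gen :: "((('d::finite \<Rightarrow> ereal) \<Rightarrow> ('d \<Rightarrow> ereal)) \<Rightarrow> bool)
    \<Rightarrow> (('d \<Rightarrow> ereal) \<Rightarrow> ('d \<Rightarrow> ereal)) \<Rightarrow> ereal" where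
  "cond_gen feas G =
     (if feas G
      then inverse (Inf {ereal (supnorm u) | u. \<not> feas (shiftmap u G)})
      else inverse (Inf {ereal (supnorm u) | u. feas (shiftmap u G)}))"

definition condP :: "(('d::finite \<Rightarrow> ereal) \<Rightarrow> ('d \<Rightarrow> ereal)) \<Rightarrow> ereal" where
  "condP G = cond_gen feasP G"

definition condPR :: "(('d::finite \<Rightarrow> ereal) \<Rightarrow> ('d \<Rightarrow> ereal)) \<Rightarrow> ereal" where
  "condPR G = cond_gen feasPR G"

end

theory Submission
  imports Defs
begin

text \<open>
  Both problems are governed by one real number \<open>\<mu>\<close>, a max-plus spectral value of \<open>F\<^sup>*\<close>.
  Weak duality: if \<open>x << s + F x\<close> for a real \<open>x\<close> and \<open>y \<le> t + F\<^sup>* y\<close> for a nonzero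
  tropical \<open>y\<close>, then \<open>s + t > 0\<close>; the proof pairs \<open>y\<close> with \<open>B \<odot> P x\<close> and uses that \<open>P\<close>
  averages.  Conversely, Brouwer's theorem applied to the normalized truncated map
  \<open>y \<mapsto> max (F\<^sup>* y) c\<close> gives real vectors with \<open>F\<^sup>* y\<^sub>c = M\<^sub>c + y\<^sub>c\<close> off the truncation.
  Each of them yields \<open>x = -(A\<^sup>T \<odot> y\<^sub>c)\<close> with \<open>x \<le> M\<^sub>c + F x\<close>, and for \<open>c \<rightarrow> -\<infinity>\<close> a limit
  point \<open>(Y, \<mu>)\<close> in the compactified space is a tropical sub-eigenvector, \<open>\<mu> + Y \<le> F\<^sup>* Y\<close>.
  Hence \<open>P\<^sub>\<real>(t + F)\<close> is feasible exactly for \<open>t > \<mu>\<close> and \<open>P(t + F\<^sup>*)\<close> exactly for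
  \<open>t \<ge> -\<mu>\<close>.  Since feasibility is monotone under shifts, both condition numbers equal
  \<open>1/|\<mu>|\<close>, and (ii), (iii) are read off the sign of \<open>\<mu>\<close>.
\<close>

section \<open>Max-plus operators\<close>

lemma Max_range_ge: "f i \<le> Max (range (f::'a::finite \<Rightarrow> 'b::linorder))"
  by (rule Max_ge) auto

lemma obtain_Max_range:
  obtains i where "Max (range (f::'a::finite \<Rightarrow> 'b::linorder)) = f i"
proof -
  have "Max (range f) \<in> range f" by (rule Max_in) auto
  then show ?thesis using that by blast
qed

lemma Min_range_le: "Min (range (f::'a::finite \<Rightarrow> 'b::linorder)) \<le> f i"
  by (rule Min_le) auto

lemma obtain_Min_range:
  obtains i where "Min (range (f::'a::finite \<Rightarrow> 'b::linorder)) = f i"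
proof -
  have "Min (range f) \<in> range f" by (rule Min_in) auto
  then show ?thesis using that by blast
qed

lemma Max_range_le_iff: "Max (range (f::'a::finite \<Rightarrow> 'b::linorder)) \<le> c \<longleftrightarrow> (\<forall>i. f i \<le> c)"
  by (subst Max_le_iff) auto

lemma Max_range_less_iff: "Max (range (f::'a::finite \<Rightarrow> 'b::linorder)) < c \<longleftrightarrow> (\<forall>i. f i < c)"
  by (subst Max_less_iff) auto

lemma le_Min_range_iff: "c \<le> Min (range (f::'a::finite \<Rightarrow> 'b::linorder)) \<longleftrightarrow> (\<forall>i. c \<le> f i)"
  by (subst Min_ge_iff) auto

lemma less_Min_range_iff: "c < Min (range (f::'a::finite \<Rightarrow> 'b::linorder)) \<longleftrightarrow> (\<forall>i. c < f i)"
  by (subst Min_gr_iff) auto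

lemma Min_range_le_iff: "Min (range (f::'a::finite \<Rightarrow> 'b::linorder)) \<le> c \<longleftrightarrow> (\<exists>i. f i \<le> c)"
  by (subst Min_le_iff) auto

lemma mp_mult_mono: "(\<And>k. z k \<le> z' k) \<Longrightarrow> mp_mult C z i \<le> mp_mult C z' i"
  unfolding mp_mult_def Max_range_le_iff by (meson Max_range_ge add_left_mono order_trans)

lemma mp_adj_mono: "(\<And>i. y i \<le> y' i) \<Longrightarrow> mp_adj C y j \<le> mp_adj C y' j"
  unfolding mp_adj_def le_Min_range_iff by (meson Min_range_le add_left_mono order_trans)

lemma lin_mult_mono:
  "(\<And>k j. 0 \<le> P k j) \<Longrightarrow> (\<And>j. z j \<le> z' j) \<Longrightarrow> lin_mult P z k \<le> lin_mult P z' k"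
  unfolding lin_mult_def by (intro sum_mono ereal_mult_left_mono) auto

lemma lin_mult_ereal: "lin_mult P (\<lambda>j. ereal (x j)) = (\<lambda>k. ereal (\<Sum>j\<in>UNIV. P k j * x j))"
  by (simp add: lin_mult_def sum_ereal)

lemma mp_mult_ereal_finite:
  assumes "\<forall>k. C i k \<noteq> \<infinity>" and "C i l \<noteq> -\<infinity>"
  shows "\<bar>mp_mult C (\<lambda>k. ereal (v k)) i\<bar> \<noteq> \<infinity>"
proof -
  obtain k where k: "mp_mult C (\<lambda>k. ereal (v k)) i = C i k + ereal (v k)"
    unfolding mp_mult_def by (rule obtain_Max_range)
  have "C i l + ereal (v l) \<le> mp_mult C (\<lambda>k. ereal (v k)) i"
    unfolding mp_mult_def by (rule Max_range_ge)
  with k assms show ?thesis by (cases "C i l"; cases "C i k") auto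
qed

lemma mp_adj_ereal_finite:
  assumes "\<forall>i. C i j \<noteq> \<infinity>" and "C h j \<noteq> -\<infinity>"
  shows "\<bar>mp_adj C (\<lambda>i. ereal (w i)) j\<bar> \<noteq> \<infinity>"
proof -
  obtain i where i: "mp_adj C (\<lambda>i. ereal (w i)) j = - C i j + ereal (w i)"
    unfolding mp_adj_def by (rule obtain_Min_range)
  have "mp_adj C (\<lambda>i. ereal (w i)) j \<le> - C h j + ereal (w h)"
    unfolding mp_adj_def by (rule Min_range_le)
  with i assms show ?thesis by (cases "C h j"; cases "C i j") auto
qed

lemma le_mp_adj_iff:
  assumes "\<And>i. C i j \<noteq> \<infinity>" and "b \<noteq> \<infinity>"
  shows "b \<le> mp_adj C y j \<longleftrightarrow> (\<forall>i. C i j + b \<le> y i)"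
proof -
  have "b \<le> - C i j + y i \<longleftrightarrow> C i j + b \<le> y i" for i
    using assms(1)[of i] assms(2) by (cases "C i j"; cases b; cases "y i") auto
  then show ?thesis unfolding mp_adj_def le_Min_range_iff by blast
qed

lemma less_mp_adj_iff:
  assumes "\<And>i. C i j \<noteq> \<infinity>"
  shows "ereal r < mp_adj C (\<lambda>i. ereal (w i)) j \<longleftrightarrow> (\<forall>i. C i j + ereal r < ereal (w i))"
proof -
  have "ereal r < - C i j + ereal (w i) \<longleftrightarrow> C i j + ereal r < ereal (w i)" for i
    using assms[of i] by (cases "C i j") auto
  then show ?thesis unfolding mp_adj_def less_Min_range_iff by blast
qed

lemma stochastic_avg_le_Max:
  assumes "row_stochastic P"
  shows "(\<Sum>j\<in>UNIV. P k j * x j) \<le> Max (range x)"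
proof -
  have "(\<Sum>j\<in>UNIV. P k j * x j) \<le> (\<Sum>j\<in>UNIV. P k j * Max (range x))"
    using assms by (intro sum_mono mult_left_mono Max_range_ge) (auto simp: row_stochastic_def)
  also have "\<dots> = Max (range x)"
    using assms by (simp add: sum_distrib_right[symmetric] row_stochastic_def)
  finally show ?thesis .
qed

lemma row_stochastic_has_pos:
  assumes "row_stochastic P"
  shows "\<exists>j. 0 < P k j"
proof (rule ccontr)
  assume "\<nexists>j. 0 < P k j"
  then have "(\<Sum>j\<in>UNIV. P k j) \<le> 0" by (simp add: sum_nonpos not_less)
  with assms show False by (simp add: row_stochastic_def)
qed

lemma lin_mult_plus_avg_le_Max:
  assumes P: "row_stochastic P" and z: "\<forall>l. z l \<noteq> \<infinity>"
  shows "lin_mult P z k + ereal (\<Sum>j\<in>UNIV. P k j * x j) \<le> Max (range (\<lambda>l. z l + ereal (x l)))"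
proof -
  let ?M = "Max (range (\<lambda>l. z l + ereal (x l)))"
  have zl: "z l + ereal (x l) \<le> ?M" for l by (rule Max_range_ge)
  have Pnn: "0 \<le> P k l" for l using P by (simp add: row_stochastic_def)
  show ?thesis
  proof (cases ?M)
    case (real m)
    have "z l \<le> ereal (m - x l)" for l using zl[of l] real by (cases "z l") auto
    then have "lin_mult P z k \<le> (\<Sum>l\<in>UNIV. ereal (P k l) * ereal (m - x l))"
      unfolding lin_mult_def by (intro sum_mono ereal_mult_left_mono) (auto simp: Pnn)
    also have "\<dots> = ereal (m - (\<Sum>l\<in>UNIV. P k l * x l))"
      using P by (simp add: sum_ereal right_diff_distrib sum_subtractf
          sum_distrib_right[symmetric] row_stochastic_def)
    finally show ?thesis using real by (cases "lin_mult P z k") auto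
  next
    case PInf
    obtain l where "?M = z l + ereal (x l)" by (rule obtain_Max_range)
    with PInf z show ?thesis by (cases "z l") auto
  next
    case MInf
    then have zm: "z l = -\<infinity>" for l using zl[of l] by (cases "z l") auto
    obtain l where l: "0 < P k l" using row_stochastic_has_pos[OF P] by blast
    have "lin_mult P z k = ereal (P k l) * z l + (\<Sum>j\<in>UNIV - {l}. ereal (P k j) * z j)"
      unfolding lin_mult_def by (simp add: sum.remove)
    moreover have "(\<Sum>j\<in>UNIV - {l}. ereal (P k j) * z j) \<noteq> \<infinity>"
      using zm Pnn by (auto simp: sum_Pinfty less_le)
    ultimately show ?thesis using l zm by simp
  qed
qed

lemma tendsto_Max_range:
  fixes f :: "'i::finite \<Rightarrow> 'a \<Rightarrow> 'b::linorder_topology"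
  assumes "\<And>i. (f i \<longlongrightarrow> a i) net"
  shows "((\<lambda>t. Max (range (\<lambda>i. f i t))) \<longlongrightarrow> Max (range a)) net"
proof -
  have "((\<lambda>t. Max ((\<lambda>i. f i t) ` S)) \<longlongrightarrow> Max (a ` S)) net" if "finite S" "S \<noteq> {}" for S
    using that
  proof (induction S rule: finite_ne_induct)
    case (insert i S)
    then have "((\<lambda>t. max (f i t) (Max ((\<lambda>i. f i t) ` S))) \<longlongrightarrow> max (a i) (Max (a ` S))) net"
      by (intro tendsto_max assms)
    with insert show ?case by simp
  qed (simp add: assms)
  then show ?thesis by simp
qed

lemma tendsto_Min_range:
  fixes f :: "'i::finite \<Rightarrow> 'a \<Rightarrow> 'b::linorder_topology"
  assumes "\<And>i. (f i \<longlongrightarrow> a i) net"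
  shows "((\<lambda>t. Min (range (\<lambda>i. f i t))) \<longlongrightarrow> Min (range a)) net"
proof -
  have "((\<lambda>t. Min ((\<lambda>i. f i t) ` S)) \<longlongrightarrow> Min (a ` S)) net" if "finite S" "S \<noteq> {}" for S
    using that
  proof (induction S rule: finite_ne_induct)
    case (insert i S)
    then have "((\<lambda>t. min (f i t) (Min ((\<lambda>i. f i t) ` S))) \<longlongrightarrow> min (a i) (Min (a ` S))) net"
      by (intro tendsto_min assms)
    with insert show ?case by simp
  qed (simp add: assms)
  then show ?thesis by simp
qed

lemma tendsto_sum_ereal_not_PInf:
  fixes f :: "'i \<Rightarrow> 'a \<Rightarrow> ereal"
  assumes "finite S" "\<And>i. i \<in> S \<Longrightarrow> (f i \<longlongrightarrow> a i) net" "\<And>i. i \<in> S \<Longrightarrow> a i \<noteq> \<infinity>"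
  shows "((\<lambda>t. \<Sum>i\<in>S. f i t) \<longlongrightarrow> (\<Sum>i\<in>S. a i)) net"
  using assms
proof (induction S rule: finite_induct)
  case (insert i S)
  then have "(\<Sum>i\<in>S. a i) \<noteq> \<infinity>" "a i \<noteq> \<infinity>" by (simp_all add: sum_Pinfty)
  with insert have "((\<lambda>t. f i t + (\<Sum>i\<in>S. f i t)) \<longlongrightarrow> a i + (\<Sum>i\<in>S. a i)) net"
    by (intro tendsto_add_ereal_general) auto
  with insert show ?case by simp
qed simp

lemma mp_mult_not_PInf:
  assumes "\<And>k. C i k \<noteq> \<infinity>" "\<And>k. z k \<noteq> \<infinity>"
  shows "mp_mult C z i \<noteq> \<infinity>"
proof -
  obtain k where "mp_mult C z i = C i k + z k"
    unfolding mp_mult_def by (rule obtain_Max_range)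
  with assms show ?thesis by simp
qed

lemma mp_mult_tendsto:
  assumes "\<And>k. C i k \<noteq> \<infinity>" "\<And>k. ((\<lambda>t. z t k) \<longlongrightarrow> z0 k) net" "\<And>k. z0 k \<noteq> \<infinity>"
  shows "((\<lambda>t. mp_mult C (z t) i) \<longlongrightarrow> mp_mult C z0 i) net"
  unfolding mp_mult_def
  by (intro tendsto_Max_range tendsto_add_ereal_general tendsto_const assms) (use assms in auto)

lemma lin_mult_tendsto:
  assumes "\<And>k j. 0 \<le> P k j" "\<And>j. ((\<lambda>t. z t j) \<longlongrightarrow> z0 j) net" "\<And>j. z0 j \<noteq> \<infinity>"
  shows "((\<lambda>t. lin_mult P (z t) k) \<longlongrightarrow> lin_mult P z0 k) net"
  unfolding lin_mult_def
proof (intro tendsto_sum_ereal_not_PInf tendsto_cmult_ereal_general assms)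
  show "ereal (P k j) * z0 j \<noteq> \<infinity>" for j
    using assms(1)[of k j] assms(3)[of j] by (cases "z0 j") auto
qed auto

lemma mp_adj_tendsto:
  assumes "\<And>i. C i j \<noteq> \<infinity>" "\<And>i. ((\<lambda>t. y t i) \<longlongrightarrow> y0 i) net"
  shows "((\<lambda>t. mp_adj C (y t) j) \<longlongrightarrow> mp_adj C y0 j) net"
  unfolding mp_adj_def
proof (intro tendsto_Min_range)
  fix i
  show "((\<lambda>t. - C i j + y t i) \<longlongrightarrow> - C i j + y0 i) net"
  proof (cases "C i j")
    case (real c)
    then show ?thesis by (intro tendsto_add_ereal_general2 tendsto_const assms) auto
  next
    case MInf
    then show ?thesis by simp
  qed (simp add: assms)
qed

section \<open>Feasibility under shifts\<close>

lemma shiftmap_zero: "shiftmap (\<lambda>_. 0) G = G"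
  by (simp add: shiftmap_def zero_ereal_def[symmetric])

lemma ereal_less_shift_iff: "ereal a < ereal t + g \<longleftrightarrow> ereal (a - t) < g"
  by (cases g) auto

lemma ereal_le_shift_iff: "b \<noteq> \<infinity> \<Longrightarrow> b \<le> ereal t + g \<longleftrightarrow> ereal (- t) + b \<le> g"
  by (cases b; cases g) auto

lemma feasPR_shiftmap_mono:
  assumes "feasPR (shiftmap u G)" "\<And>i. u i \<le> u' i"
  shows "feasPR (shiftmap u' G)"
proof -
  obtain x where x: "\<And>i. ereal (x i) < ereal (u i) + G (\<lambda>j. ereal (x j)) i"
    using assms(1) unfolding feasPR_def shiftmap_def by blast
  have "ereal (u i) + g \<le> ereal (u' i) + g" for i and g :: ereal
    using assms(2)[of i] by (intro add_right_mono) simp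
  with x have "ereal (x i) < ereal (u' i) + G (\<lambda>j. ereal (x j)) i" for i
    using order_less_le_trans by blast
  then show ?thesis unfolding feasPR_def shiftmap_def by blast
qed

lemma feasP_shiftmap_mono:
  assumes "feasP (shiftmap u G)" "\<And>i. u i \<le> u' i"
  shows "feasP (shiftmap u' G)"
proof -
  obtain y where y: "tvec y" "y \<noteq> tzero" "\<And>i. y i \<le> ereal (u i) + G y i"
    using assms(1) unfolding feasP_def shiftmap_def by blast
  have "ereal (u i) + g \<le> ereal (u' i) + g" for i and g :: ereal
    using assms(2)[of i] by (intro add_right_mono) simp
  with y(3) have "y i \<le> ereal (u' i) + G y i" for i
    using order_trans by blast
  with y(1,2) show ?thesis unfolding feasP_def shiftmap_def by blast
qed

lemma feasPR_imp_feasP: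
  fixes G :: "('d \<Rightarrow> ereal) \<Rightarrow> ('d \<Rightarrow> ereal)"
  assumes "feasPR G"
  shows "feasP G"
proof -
  obtain x :: "'d \<Rightarrow> real" where "\<And>i. ereal (x i) < G (\<lambda>j. ereal (x j)) i"
    using assms unfolding feasPR_def by blast
  moreover have "tvec (\<lambda>j. ereal (x j))" by (simp add: tvec_def)
  moreover have "(\<lambda>j. ereal (x j)) \<noteq> tzero" by (simp add: tzero_def fun_eq_iff)
  ultimately show ?thesis unfolding feasP_def by (blast intro: less_imp_le)
qed

lemma feasPR_shiftmap_const_iff:
  "feasPR (shiftmap (\<lambda>_. t) G) \<longleftrightarrow> (\<exists>x. \<forall>i. ereal (x i - t) < G (\<lambda>j. ereal (x j)) i)"
  unfolding feasPR_def shiftmap_def by (simp only: ereal_less_shift_iff)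

lemma feasP_shiftmap_const_iff:
  "feasP (shiftmap (\<lambda>_. t) G) \<longleftrightarrow> (\<exists>y. tvec y \<and> y \<noteq> tzero \<and> (\<forall>i. ereal (- t) + y i \<le> G y i))"
proof -
  have "(tvec y \<and> y \<noteq> tzero \<and> (\<forall>i. y i \<le> ereal t + G y i)) \<longleftrightarrow>
      (tvec y \<and> y \<noteq> tzero \<and> (\<forall>i. ereal (- t) + y i \<le> G y i))" for y
    by (auto simp: tvec_def ereal_le_shift_iff)
  then show ?thesis unfolding feasP_def shiftmap_def by simp
qed

lemma supnorm_ge: "\<bar>u i\<bar> \<le> supnorm u"
  unfolding supnorm_def by (rule Max_range_ge)

lemma supnorm_const: "supnorm (\<lambda>_::'d::finite. t) = \<bar>t\<bar>"
  unfolding supnorm_def by simp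

lemma ereal_Inf_eq_approx:
  fixes x :: real
  assumes "\<And>s. s \<in> S \<Longrightarrow> ereal x \<le> s" and "\<And>d. 0 < d \<Longrightarrow> ereal (x + d) \<in> S"
  shows "Inf S = ereal x"
proof (rule antisym)
  show "Inf S \<le> ereal x"
  proof (rule ereal_le_epsilon2)
    fix d :: real
    assume "0 < d"
    then show "Inf S \<le> ereal x + ereal d" using assms(2) by (simp add: Inf_lower)
  qed
qed (use assms(1) in \<open>rule Inf_greatest\<close>)

locale shift_threshold =
  fixes feas :: "(('d::finite \<Rightarrow> ereal) \<Rightarrow> ('d \<Rightarrow> ereal)) \<Rightarrow> bool"
    and G :: "('d \<Rightarrow> ereal) \<Rightarrow> ('d \<Rightarrow> ereal)" and \<theta> :: real
  assumes mono: "\<And>u u'. feas (shiftmap u G) \<Longrightarrow> (\<And>i. u i \<le> u' i) \<Longrightarrow> feas (shiftmap u' G)"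
    and above: "\<And>t. \<theta> < t \<Longrightarrow> feas (shiftmap (\<lambda>_. t) G)"
    and below: "\<And>t. t < \<theta> \<Longrightarrow> \<not> feas (shiftmap (\<lambda>_. t) G)"
begin

lemma Inf_supnorm_infeasible:
  assumes "\<theta> \<le> 0"
  shows "Inf {ereal (supnorm u) | u. \<not> feas (shiftmap u G)} = ereal (- \<theta>)"
proof (rule ereal_Inf_eq_approx)
  fix s assume "s \<in> {ereal (supnorm u) | u. \<not> feas (shiftmap u G)}"
  then obtain u where u: "s = ereal (supnorm u)" "\<not> feas (shiftmap u G)" by blast
  have "- \<theta> \<le> supnorm u"
  proof (rule ccontr)
    assume "\<not> - \<theta> \<le> supnorm u"
    then have "feas (shiftmap (\<lambda>_. - supnorm u) G)" by (intro above) simp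
    moreover have "- supnorm u \<le> u i" for i using supnorm_ge[of u i] by linarith
    ultimately have "feas (shiftmap u G)" by (rule mono)
    with u(2) show False ..
  qed
  with u(1) show "ereal (- \<theta>) \<le> s" by simp
next
  fix d :: real assume "0 < d"
  then have "\<not> feas (shiftmap (\<lambda>_. \<theta> - d) G)" using below by simp
  moreover have "ereal (- \<theta> + d) = ereal (supnorm (\<lambda>_::'d. \<theta> - d))"
    using \<open>0 < d\<close> assms by (simp add: supnorm_const)
  ultimately show "ereal (- \<theta> + d) \<in> {ereal (supnorm u) | u. \<not> feas (shiftmap u G)}" by blast
qed

lemma Inf_supnorm_feasible:
  assumes "0 \<le> \<theta>"
  shows "Inf {ereal (supnorm u) | u. feas (shiftmap u G)} = ereal \<theta>"
proof (rule ereal_Inf_eq_approx)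
  fix s assume "s \<in> {ereal (supnorm u) | u. feas (shiftmap u G)}"
  then obtain u where u: "s = ereal (supnorm u)" "feas (shiftmap u G)" by blast
  have "\<theta> \<le> supnorm u"
  proof (rule ccontr)
    assume "\<not> \<theta> \<le> supnorm u"
    have "u i \<le> supnorm u" for i using supnorm_ge[of u i] by linarith
    with u(2) have "feas (shiftmap (\<lambda>_. supnorm u) G)" by (rule mono)
    moreover have "\<not> feas (shiftmap (\<lambda>_. supnorm u) G)"
      using \<open>\<not> \<theta> \<le> supnorm u\<close> by (intro below) simp
    ultimately show False by contradiction
  qed
  with u(1) show "ereal \<theta> \<le> s" by simp
next
  fix d :: real assume "0 < d"
  then have "feas (shiftmap (\<lambda>_. \<theta> + d) G)" using above by simp
  moreover have "ereal (\<theta> + d) = ereal (supnorm (\<lambda>_::'d. \<theta> + d))"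
    using \<open>0 < d\<close> assms by (simp add: supnorm_const)
  ultimately show "ereal (\<theta> + d) \<in> {ereal (supnorm u) | u. feas (shiftmap u G)}" by blast
qed

lemma cond_gen_eq: "cond_gen feas G = inverse (ereal \<bar>\<theta>\<bar>)"
proof (cases "feas G")
  case True
  then have "\<theta> \<le> 0" using below[of 0] by (force simp: shiftmap_zero)
  with True show ?thesis by (simp add: cond_gen_def Inf_supnorm_infeasible)
next
  case False
  then have "0 \<le> \<theta>" using above[of 0] by (force simp: shiftmap_zero)
  with False show ?thesis by (simp add: cond_gen_def Inf_supnorm_feasible)
qed

end

section \<open>Normalized eigenvectors and limits\<close>

definition normalize_max :: "('d::finite \<Rightarrow> real) \<Rightarrow> 'd \<Rightarrow> real" where
  "normalize_max y = (\<lambda>i. y i - Max (range y))"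

lemma normalize_max_le: "normalize_max y i \<le> 0"
  unfolding normalize_max_def using Max_range_ge[of y i] by simp

lemma Max_range_normalize_max: "Max (range (normalize_max y)) = 0"
proof (rule antisym)
  show "Max (range (normalize_max y)) \<le> 0"
    unfolding Max_range_le_iff by (simp add: normalize_max_le)
  obtain i where "Max (range y) = y i" by (rule obtain_Max_range)
  then show "0 \<le> Max (range (normalize_max y))"
    using Max_range_ge[of "normalize_max y" i] by (simp add: normalize_max_def)
qed

lemma normalize_max_id: "Max (range y) = 0 \<Longrightarrow> normalize_max y = y"
  by (simp add: normalize_max_def)

lemma tendsto_normalize_max:
  "(\<And>j. ((\<lambda>t. y t j) \<longlongrightarrow> y0 j) net) \<Longrightarrow> ((\<lambda>t. normalize_max (y t) i) \<longlongrightarrow> normalize_max y0 i) net"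
  unfolding normalize_max_def by (intro tendsto_diff tendsto_Max_range)

lemma normalized_eigenvector_exists:
  fixes g :: "('d::finite \<Rightarrow> real) \<Rightarrow> 'd \<Rightarrow> real"
  assumes cont: "\<And>(net :: (real^'d) filter) y y0 i.
      (\<And>j. ((\<lambda>t. y t j) \<longlongrightarrow> y0 j) net) \<Longrightarrow> ((\<lambda>t. g (y t) i) \<longlongrightarrow> g y0 i) net"
    and bounds: "\<And>y i. (\<And>j. y j \<le> 0) \<Longrightarrow> lo \<le> g y i \<and> g y i \<le> hi"
  obtains y M where "Max (range y) = 0" "\<And>i. g y i = M + y i" "M \<le> hi"
proof -
  define Phi :: "real^'d \<Rightarrow> real^'d" where
    "Phi v = (\<chi> i. normalize_max (g (normalize_max (\<lambda>j. v $ j))) i)" for v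
  have g_bounds: "lo \<le> g (normalize_max y) i \<and> g (normalize_max y) i \<le> hi" for y i
    using bounds normalize_max_le by blast
  have "continuous_on UNIV Phi"
    unfolding continuous_on_def Phi_def
    by (intro ballI tendsto_vec_lambda tendsto_normalize_max cont tendsto_vec_nth tendsto_ident_at)
  define K :: "(real^'d) set" where "K = cbox (\<chi> i. lo - hi) 0"
  have Phi_K: "Phi v \<in> K" for v
  proof -
    let ?g = "g (normalize_max (\<lambda>j. v $ j))"
    have "Max (range ?g) \<le> hi" using g_bounds by (simp add: Max_range_le_iff)
    then have "lo - hi \<le> normalize_max ?g i" for i
      using g_bounds[of "\<lambda>j. v $ j" i] unfolding normalize_max_def by linarith
    then show ?thesis unfolding K_def Phi_def mem_box_cart by (simp add: normalize_max_le)
  qed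
  then have "K \<noteq> {}" by blast
  then obtain v where "Phi v = v"
    using brouwer[of K Phi] \<open>continuous_on UNIV Phi\<close> Phi_K unfolding K_def
    by (auto intro: continuous_on_subset)
  define y where "y = (\<lambda>j. v $ j)"
  have y: "normalize_max (g (normalize_max y)) = y"
  proof
    fix i
    have "v $ i = Phi v $ i" using \<open>Phi v = v\<close> by simp
    then show "normalize_max (g (normalize_max y)) i = y i" by (simp add: Phi_def y_def)
  qed
  have max_y: "Max (range y) = 0"
    using Max_range_normalize_max[of "g (normalize_max y)"] by (simp only: y)
  then have "normalize_max y = y" by (rule normalize_max_id)
  with y have gy: "normalize_max (g y) = y" by simp
  have eigen: "g y i = Max (range (g y)) + y i" for i
    using fun_cong[OF gy, of i] unfolding normalize_max_def by linarith
  obtain i0 where "Max (range (g y)) = g y i0" by (rule obtain_Max_range)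
  with g_bounds[of y i0] have "Max (range (g y)) \<le> hi" by (simp add: \<open>normalize_max y = y\<close>)
  with max_y eigen show ?thesis by (rule that)
qed

lemma tvec_nonzero_of_normalized_limit:
  fixes ys :: "nat \<Rightarrow> 'd::finite \<Rightarrow> real"
  assumes norm: "\<And>n. Max (range (ys n)) = 0" and Y: "\<And>i. (\<lambda>n. ereal (ys n i)) \<longlonglongrightarrow> Y i"
  shows "tvec Y" "Y \<noteq> tzero"
proof -
  have Y_le: "Y i \<le> 0" for i
    using norm Max_range_ge[of "ys _" i] by (intro tendsto_upperbound[OF Y]) auto
  have "Y i \<noteq> \<infinity>" for i using Y_le[of i] by auto
  then show "tvec Y" by (simp add: tvec_def)
  have "(\<lambda>n. Max (range (\<lambda>i. ereal (ys n i)))) \<longlonglongrightarrow> Max (range Y)"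
    by (rule tendsto_Max_range) (rule Y)
  moreover have "Max (range (\<lambda>i. ereal (ys n i))) = 0" for n
  proof -
    have "ereal (Max (range (ys n))) = Max (range (\<lambda>i. ereal (ys n i)))"
      by (subst mono_Max_commute) (auto simp: mono_def image_image)
    with norm[of n] show ?thesis by (simp add: zero_ereal_def)
  qed
  ultimately have "Max (range Y) = 0" by (simp add: LIMSEQ_const_iff)
  moreover obtain i where "Max (range Y) = Y i" by (rule obtain_Max_range)
  ultimately show "Y \<noteq> tzero" by (auto simp: tzero_def fun_eq_iff intro!: exI[of _ i])
qed

lemma compact_ereal_fun_UNIV: "compact (UNIV :: ('i::finite \<Rightarrow> ereal) set)"
proof -
  have "compact_space (product_topology (\<lambda>i::'i. (euclidean::ereal topology)) UNIV)"
    unfolding compact_space_product_topology by (simp add: compact_space_def compact_UNIV)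
  then show ?thesis unfolding euclidean_product_topology compact_space_def by simp
qed

lemma convergent_subsequence_ereal_fun_real:
  fixes ys :: "nat \<Rightarrow> 'i::finite \<Rightarrow> real" and Ms :: "nat \<Rightarrow> real"
  assumes "\<And>n. Ms n \<in> {a..b}"
  obtains r Y mu where "strict_mono r" "(\<lambda>n. Ms (r n)) \<longlonglongrightarrow> mu"
    "\<And>i. (\<lambda>n. ereal (ys (r n) i)) \<longlonglongrightarrow> Y i"
proof -
  define X where "X n = ((\<lambda>i. ereal (ys n i)), Ms n)" for n
  have "seq_compact (UNIV \<times> {a..b} :: (('i \<Rightarrow> ereal) \<times> real) set)"
    by (intro compact_imp_seq_compact compact_Times compact_ereal_fun_UNIV compact_Icc)
  then obtain l r where r: "strict_mono r" and lim: "(X \<circ> r) \<longlonglongrightarrow> l"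
    using seq_compactE[of _ X] assms unfolding X_def by blast
  have "(\<lambda>n. Ms (r n)) \<longlonglongrightarrow> snd l" using tendsto_snd[OF lim] by (simp add: X_def)
  moreover have "(\<lambda>n. fst ((X \<circ> r) n)) \<longlonglongrightarrow> fst l" by (rule tendsto_fst[OF lim])
  then have "(\<lambda>n. ereal (ys (r n) i)) \<longlonglongrightarrow> fst l i" for i
    using continuous_on_tendsto_compose[OF continuous_on_product_coordinates[of i]]
    by (fastforce simp: X_def)
  ultimately show ?thesis by (rule that[OF r])
qed

section \<open>The operators F and F*\<close>

locale tropical_operator_pair =
  fixes A :: "'m::finite \<Rightarrow> 'n::finite \<Rightarrow> ereal"
    and B :: "'m \<Rightarrow> 'q::finite \<Rightarrow> ereal"
    and P :: "'q \<Rightarrow> 'n \<Rightarrow> real"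
  assumes A_not_PInf: "\<And>i j. A i j \<noteq> \<infinity>"
    and B_not_PInf: "\<And>i k. B i k \<noteq> \<infinity>"
    and P_stochastic: "row_stochastic P"
    and B_rows: "\<And>i. \<exists>k. B i k \<noteq> -\<infinity>"
    and A_cols: "\<And>j. \<exists>i. A i j \<noteq> -\<infinity>"
begin

abbreviation F :: "('n \<Rightarrow> ereal) \<Rightarrow> ('n \<Rightarrow> ereal)" where
  "F \<equiv> opF A B P"

abbreviation Fstar :: "('m \<Rightarrow> ereal) \<Rightarrow> ('m \<Rightarrow> ereal)" where
  "Fstar \<equiv> opFstar A B P"

lemma P_nonneg: "0 \<le> P k j"
  using P_stochastic by (simp add: row_stochastic_def)

definition AT_real :: "('m \<Rightarrow> real) \<Rightarrow> 'n \<Rightarrow> real" where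
  "AT_real y l = real_of_ereal (mp_mult (mtransp A) (\<lambda>i. ereal (y i)) l)"

lemma AT_real: "mp_mult (mtransp A) (\<lambda>i. ereal (y i)) = (\<lambda>l. ereal (AT_real y l))"
proof
  fix l
  obtain i where "A i l \<noteq> -\<infinity>" using A_cols by blast
  then have "\<bar>mp_mult (mtransp A) (\<lambda>i. ereal (y i)) l\<bar> \<noteq> \<infinity>"
    by (intro mp_mult_ereal_finite[where l=i]) (auto simp: mtransp_def A_not_PInf)
  then show "mp_mult (mtransp A) (\<lambda>i. ereal (y i)) l = ereal (AT_real y l)"
    by (simp add: AT_real_def ereal_real')
qed

definition BP_real :: "('n \<Rightarrow> real) \<Rightarrow> 'm \<Rightarrow> real" where
  "BP_real x i = real_of_ereal (mp_mult B (lin_mult P (\<lambda>j. ereal (x j))) i)"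

lemma BP_real: "mp_mult B (lin_mult P (\<lambda>j. ereal (x j))) = (\<lambda>i. ereal (BP_real x i))"
proof
  fix i
  obtain k where "B i k \<noteq> -\<infinity>" using B_rows by blast
  then have "\<bar>mp_mult B (\<lambda>k. ereal (\<Sum>j\<in>UNIV. P k j * x j)) i\<bar> \<noteq> \<infinity>"
    by (intro mp_mult_ereal_finite[where l=k]) (auto simp: B_not_PInf)
  then show "mp_mult B (lin_mult P (\<lambda>j. ereal (x j))) i = ereal (BP_real x i)"
    by (simp add: BP_real_def ereal_real' lin_mult_ereal)
qed

definition Fstar_real :: "('m \<Rightarrow> real) \<Rightarrow> 'm \<Rightarrow> real" where
  "Fstar_real y i = real_of_ereal (Fstar (\<lambda>i. ereal (y i)) i)"

lemma Fstar_real: "Fstar (\<lambda>i. ereal (y i)) = (\<lambda>i. ereal (Fstar_real y i))"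
proof
  fix i
  obtain k where "B i k \<noteq> -\<infinity>" using B_rows by blast
  then have "\<bar>mp_adj (mtransp B) (\<lambda>k. ereal (\<Sum>j\<in>UNIV. P k j * AT_real y j)) i\<bar> \<noteq> \<infinity>"
    by (intro mp_adj_ereal_finite[where h=k]) (auto simp: B_not_PInf mtransp_def)
  then show "Fstar (\<lambda>i. ereal (y i)) i = ereal (Fstar_real y i)"
    by (simp add: Fstar_real_def ereal_real' opFstar_def AT_real lin_mult_ereal)
qed

lemma Fstar_mono: "(\<And>i. y i \<le> y' i) \<Longrightarrow> Fstar y i \<le> Fstar y' i"
  unfolding opFstar_def by (intro mp_adj_mono lin_mult_mono mp_mult_mono P_nonneg)

lemma Fstar_real_mono: "(\<And>i. y i \<le> y' i) \<Longrightarrow> Fstar_real y i \<le> Fstar_real y' i"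
  using Fstar_mono[of "\<lambda>i. ereal (y i)" "\<lambda>i. ereal (y' i)" i] by (simp add: Fstar_real)

lemma Fstar_tendsto:
  assumes "\<And>i. ((\<lambda>t. y t i) \<longlongrightarrow> y0 i) net" and "\<And>i. y0 i \<noteq> \<infinity>"
  shows "((\<lambda>t. Fstar (y t) i) \<longlongrightarrow> Fstar y0 i) net"
  unfolding opFstar_def
proof (intro mp_adj_tendsto lin_mult_tendsto mp_mult_tendsto P_nonneg assms)
  show "mp_mult (mtransp A) y0 l \<noteq> \<infinity>" for l
    by (intro mp_mult_not_PInf assms) (simp add: mtransp_def A_not_PInf)
qed (simp_all add: mtransp_def A_not_PInf B_not_PInf)

lemma Fstar_real_tendsto:
  assumes "\<And>i. ((\<lambda>t. y t i) \<longlongrightarrow> y0 i) net"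
  shows "((\<lambda>t. Fstar_real (y t) i) \<longlongrightarrow> Fstar_real y0 i) net"
proof -
  have "((\<lambda>t. Fstar (\<lambda>i. ereal (y t i)) i) \<longlongrightarrow> Fstar (\<lambda>i. ereal (y0 i)) i) net"
    by (intro Fstar_tendsto tendsto_ereal assms) simp
  then show ?thesis unfolding Fstar_real lim_ereal .
qed

lemma AT_plus_less_pairing:
  assumes x: "\<And>j. ereal (x j - s) < F (\<lambda>j. ereal (x j)) j"
    and y: "\<And>i. y i \<noteq> \<infinity>" and d: "\<And>i. y i + ereal (BP_real x i) \<le> ereal d"
  shows "mp_mult (mtransp A) y l + ereal (x l) < ereal (d + s)"
proof -
  have "A i l + y i < ereal (d + s - x l)" for i
  proof (cases "y i")
    case (real yi)
    have "A i l + ereal (x l - s) < ereal (BP_real x i)"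
      using x[of l] unfolding opF_def BP_real by (simp add: less_mp_adj_iff A_not_PInf)
    with d[of i] real A_not_PInf[of i l] show ?thesis by (cases "A i l") auto
  next
    case MInf
    then show ?thesis using A_not_PInf[of i l] by (cases "A i l") auto
  qed (use y in blast)
  then have "mp_mult (mtransp A) y l < ereal (d + s - x l)"
    unfolding mp_mult_def mtransp_def Max_range_less_iff by blast
  then show ?thesis by (cases "mp_mult (mtransp A) y l") auto
qed

lemma weak_duality:
  assumes x: "\<And>j. ereal (x j - s) < F (\<lambda>j. ereal (x j)) j"
    and y: "tvec y" "y \<noteq> tzero" and mu: "\<And>i. ereal mu + y i \<le> Fstar y i"
  shows "mu < s"
proof -
  define z where "z = mp_mult (mtransp A) y"
  define px where "px k = (\<Sum>j\<in>UNIV. P k j * x j)" for k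
  have y_fin: "y i \<noteq> \<infinity>" for i using y(1) by (simp add: tvec_def)
  have By: "B i k + (ereal mu + y i) \<le> lin_mult P z k" for i k
    using mu[of i] y_fin[of i] unfolding opFstar_def z_def
    by (subst (asm) le_mp_adj_iff) (auto simp: mtransp_def B_not_PInf)
  \<comment> \<open>\<open>D\<close> is the max-plus pairing of \<open>y\<close> with \<open>B \<odot> P x\<close>; the chain below squeezes it
    as \<open>\<mu> + D < D + s\<close>.\<close>
  define D where "D = Max (range (\<lambda>i. y i + ereal (BP_real x i)))"
  obtain i0 where i0: "D = y i0 + ereal (BP_real x i0)"
    unfolding D_def by (rule obtain_Max_range)
  obtain i where "y i \<noteq> -\<infinity>" using y(2) by (auto simp: tzero_def)
  moreover have "y i + ereal (BP_real x i) \<le> D" unfolding D_def by (rule Max_range_ge)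
  ultimately have "\<bar>D\<bar> \<noteq> \<infinity>" using i0 y_fin[of i0] by (cases "y i"; cases "y i0") auto
  then obtain d where d: "D = ereal d" by (cases D) auto
  obtain k0 where "Max (range (\<lambda>k. B i0 k + ereal (px k))) = B i0 k0 + ereal (px k0)"
    by (rule obtain_Max_range)
  then have k0: "ereal (BP_real x i0) = B i0 k0 + ereal (px k0)"
    using fun_cong[OF BP_real[of x], of i0] by (simp add: px_def mp_mult_def lin_mult_ereal)
  have "y i + ereal (BP_real x i) \<le> ereal d" for i unfolding d[symmetric] D_def by (rule Max_range_ge)
  with x y_fin have zx: "z l + ereal (x l) < ereal (d + s)" for l
    unfolding z_def by (rule AT_plus_less_pairing)
  have "ereal (mu + d) \<le> lin_mult P z k0 + ereal (px k0)"
    using By[of i0 k0] i0 d k0 y_fin[of i0] B_not_PInf[of i0 k0]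
    by (cases "y i0"; cases "B i0 k0"; cases "lin_mult P z k0") auto
  also have "\<dots> \<le> Max (range (\<lambda>l. z l + ereal (x l)))"
  proof -
    have "z l \<noteq> \<infinity>" for l using zx[of l] by (cases "z l") auto
    then show ?thesis unfolding px_def by (intro lin_mult_plus_avg_le_Max P_stochastic) simp
  qed
  also have "\<dots> < ereal (d + s)" unfolding Max_range_less_iff using zx by blast
  finally show ?thesis by simp
qed

lemma F_sub_eigen_of_Fstar_super_eigen:
  assumes "\<And>i. Fstar_real y i \<le> M + y i"
  shows "ereal (- AT_real y j - M) \<le> F (\<lambda>j. ereal (- AT_real y j)) j"
proof -
  let ?x = "\<lambda>j. ereal (- AT_real y j)"
  define pz where "pz k = (\<Sum>l\<in>UNIV. P k l * AT_real y l)" for k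
  have Px: "lin_mult P ?x = (\<lambda>k. ereal (- pz k))"
    by (simp add: lin_mult_ereal pz_def sum_negf)
  have BPx: "ereal (- M - y i) \<le> mp_mult B (lin_mult P ?x) i" for i
  proof -
    have "Min (range (\<lambda>k. - B i k + ereal (pz k))) = ereal (Fstar_real y i)"
      using fun_cong[OF Fstar_real[of y], of i] unfolding opFstar_def AT_real lin_mult_ereal
      by (simp add: mp_adj_def mtransp_def pz_def)
    with assms[of i] have "Min (range (\<lambda>k. - B i k + ereal (pz k))) \<le> ereal (M + y i)" by simp
    then obtain k where "- B i k + ereal (pz k) \<le> ereal (M + y i)"
      unfolding Min_range_le_iff by blast
    then have "ereal (- M - y i) \<le> B i k + ereal (- pz k)"
      using B_not_PInf[of i k] by (cases "B i k") auto
    also have "\<dots> \<le> mp_mult B (lin_mult P ?x) i"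
      unfolding Px mp_mult_def by (rule Max_range_ge)
    finally show ?thesis .
  qed
  have "A i j + ereal (- AT_real y j - M) \<le> mp_mult B (lin_mult P ?x) i" for i
  proof (cases "A i j")
    case (real a)
    have "A i j + ereal (y i) \<le> mp_mult (mtransp A) (\<lambda>i. ereal (y i)) j"
      unfolding mp_mult_def mtransp_def by (rule Max_range_ge)
    then have "A i j + ereal (- AT_real y j - M) \<le> ereal (- M - y i)" using real by (simp add: AT_real)
    then show ?thesis using BPx[of i] by (rule order_trans)
  qed (use A_not_PInf in auto)
  then show ?thesis unfolding opF_def by (simp add: le_mp_adj_iff A_not_PInf)
qed

lemma F_le_Max_plus: "\<exists>K. \<forall>x j. F (\<lambda>j. ereal (x j)) j \<le> ereal (Max (range x) + K)"
proof -
  define b where "b i = Max (range (\<lambda>k. real_of_ereal (B i k)))" for i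
  have b: "B i k \<le> ereal (b i)" for i k
  proof -
    have "B i k \<le> ereal (real_of_ereal (B i k))"
      using B_not_PInf[of i k] by (cases "B i k") auto
    also have "\<dots> \<le> ereal (b i)" unfolding b_def by (simp add: Max_range_ge)
    finally show ?thesis .
  qed
  obtain ia where ia: "\<And>j. A (ia j) j \<noteq> -\<infinity>"
    using choice[of "\<lambda>j i. A i j \<noteq> -\<infinity>"] A_cols by blast
  define a where "a j = real_of_ereal (A (ia j) j)" for j
  have a: "A (ia j) j = ereal (a j)" for j
    using ia[of j] A_not_PInf[of "ia j" j] unfolding a_def by (cases "A (ia j) j") auto
  define K where "K = Max (range (\<lambda>j. b (ia j) - a j))"
  have "F (\<lambda>j. ereal (x j)) j \<le> ereal (Max (range x) + K)" for x j
  proof -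
    have "B i k + ereal (\<Sum>l\<in>UNIV. P k l * x l) \<le> ereal (b i) + ereal (Max (range x))" for i k
      using stochastic_avg_le_Max[OF P_stochastic] by (intro add_mono b) simp
    then have BPx: "ereal (BP_real x i) \<le> ereal (b i + Max (range x))" for i
      using fun_cong[OF BP_real[of x], of i, symmetric]
      by (simp add: mp_mult_def lin_mult_ereal Max_range_le_iff)
    have "F (\<lambda>j. ereal (x j)) j \<le> - A (ia j) j + ereal (BP_real x (ia j))"
      unfolding opF_def BP_real mp_adj_def by (rule Min_range_le)
    also have "\<dots> \<le> ereal (Max (range x) + (b (ia j) - a j))"
      using a[of j] BPx[of "ia j"] by simp
    also have "\<dots> \<le> ereal (Max (range x) + K)"
      unfolding K_def using Max_range_ge[of "\<lambda>j. b (ia j) - a j" j] by simp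
    finally show ?thesis .
  qed
  then show ?thesis by blast
qed

lemma Fstar_super_eigenvalue_bounded_below:
  obtains K where "\<And>y M. (\<And>i. Fstar_real y i \<le> M + y i) \<Longrightarrow> - K \<le> M"
proof -
  obtain K where K: "\<And>x j. F (\<lambda>j. ereal (x j)) j \<le> ereal (Max (range x) + K)"
    using F_le_Max_plus by blast
  have "- K \<le> M" if "\<And>i. Fstar_real y i \<le> M + y i" for y M
  proof -
    let ?x = "\<lambda>j. - AT_real y j"
    obtain j where j: "Max (range ?x) = ?x j" by (rule obtain_Max_range)
    have "ereal (?x j - M) \<le> F (\<lambda>j. ereal (?x j)) j"
      using that by (rule F_sub_eigen_of_Fstar_super_eigen)
    also have "\<dots> \<le> ereal (?x j + K)" using K[of ?x j] j by simp
    finally show ?thesis by simp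
  qed
  then show ?thesis by (rule that)
qed

text \<open>The truncation level \<open>c\<close> bounds the normalized map from below, so that it maps a
  compact cube into itself.\<close>

lemma truncated_Fstar_eigenvector:
  assumes "c \<le> 0"
  obtains y M where "Max (range y) = 0" "\<And>i. max (Fstar_real y i) c = M + y i"
    "M \<le> Max (range (\<lambda>j. max (Fstar_real (\<lambda>_. 0) j) 0))"
proof (rule normalized_eigenvector_exists[where g = "\<lambda>y i. max (Fstar_real y i) c"])
  show "((\<lambda>t. max (Fstar_real (y t) i) c) \<longlongrightarrow> max (Fstar_real y0 i) c) net"
    if "\<And>j. ((\<lambda>t. y t j) \<longlongrightarrow> y0 j) net" for net :: "(real^'m) filter" and y y0 i
    by (intro tendsto_max tendsto_const Fstar_real_tendsto that)
  fix y :: "'m \<Rightarrow> real" and i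
  assume "\<And>j. y j \<le> 0"
  then have "Fstar_real y i \<le> Fstar_real (\<lambda>_. 0) i" by (rule Fstar_real_mono)
  then have "max (Fstar_real y i) c \<le> max (Fstar_real (\<lambda>_. 0) i) 0" using assms by linarith
  also have "\<dots> \<le> Max (range (\<lambda>j. max (Fstar_real (\<lambda>_. 0) j) 0))" by (rule Max_range_ge)
  finally show "c \<le> max (Fstar_real y i) c \<and>
      max (Fstar_real y i) c \<le> Max (range (\<lambda>j. max (Fstar_real (\<lambda>_. 0) j) 0))" by simp
qed (rule that)

lemma Fstar_sub_eigenvector_of_limit:
  assumes trunc: "\<And>n i. max (Fstar_real (ys n) i) (c n) = Ms n + ys n i"
    and c: "filterlim c at_bot sequentially"
    and Ms: "Ms \<longlonglongrightarrow> mu"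
    and Y: "\<And>i. (\<lambda>n. ereal (ys n i)) \<longlonglongrightarrow> Y i" and Y_fin: "tvec Y"
  shows "ereal mu + Y i \<le> Fstar Y i"
proof (cases "Y i")
  case (real yi)
  \<comment> \<open>Since \<open>c n \<rightarrow> -\<infinity>\<close>, the truncation is eventually inactive in coordinate \<open>i\<close>.\<close>
  have ys_i: "(\<lambda>n. ys n i) \<longlonglongrightarrow> yi" using Y[of i] unfolding real lim_ereal .
  have lim: "(\<lambda>n. Ms n + ys n i) \<longlonglongrightarrow> mu + yi" by (intro tendsto_add Ms ys_i)
  then have "eventually (\<lambda>n. mu + yi - 1 < Ms n + ys n i) sequentially"
    by (rule order_tendstoD(1)) simp
  moreover have "eventually (\<lambda>n. c n < mu + yi - 1) sequentially"
    using c by (simp add: filterlim_at_bot_dense)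
  ultimately have "eventually (\<lambda>n. ereal (Ms n + ys n i) = Fstar (\<lambda>i. ereal (ys n i)) i) sequentially"
  proof eventually_elim
    case (elim n)
    then have "Fstar_real (ys n) i = Ms n + ys n i" using trunc[of n i] by linarith
    then show ?case by (simp add: Fstar_real)
  qed
  moreover have "(\<lambda>n. ereal (Ms n + ys n i)) \<longlonglongrightarrow> ereal (mu + yi)"
    using lim by (rule tendsto_ereal)
  ultimately have "(\<lambda>n. Fstar (\<lambda>i. ereal (ys n i)) i) \<longlonglongrightarrow> ereal (mu + yi)"
    by (rule Lim_transform_eventually[rotated])
  moreover have "(\<lambda>n. Fstar (\<lambda>i. ereal (ys n i)) i) \<longlonglongrightarrow> Fstar Y i"
    using Y Y_fin by (intro Fstar_tendsto) (auto simp: tvec_def)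
  ultimately have "Fstar Y i = ereal (mu + yi)" using LIMSEQ_unique by blast
  then show ?thesis using real by simp
qed (use Y_fin in \<open>auto simp: tvec_def\<close>)

lemma truncated_Fstar_eigenvector_sequence:
  obtains ys Ms a b where "\<And>n. Max (range (ys n)) = 0"
    "\<And>n i. max (Fstar_real (ys n) i) (- real n) = Ms n + ys n i" "\<And>n. Ms n \<in> {a..b}"
proof -
  define H where "H = Max (range (\<lambda>j. max (Fstar_real (\<lambda>_. 0) j) 0))"
  have "\<exists>y M. Max (range y) = 0 \<and> (\<forall>i. max (Fstar_real y i) (- real n) = M + y i) \<and> M \<le> H"
    for n :: nat
    by (rule truncated_Fstar_eigenvector[of "- real n"]) (auto simp: H_def)
  then obtain ys Ms where norm: "\<And>n. Max (range (ys n)) = 0"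
    and trunc: "\<And>n i. max (Fstar_real (ys n) i) (- real n) = Ms n + ys n i"
    and Ms_le: "\<And>n. Ms n \<le> H"
    by metis
  obtain K where K: "\<And>y M. (\<And>i. Fstar_real y i \<le> M + y i) \<Longrightarrow> - K \<le> M"
    by (rule Fstar_super_eigenvalue_bounded_below) blast
  have super: "Fstar_real (ys n) i \<le> Ms n + ys n i" for n i
    using trunc[of n i] by linarith
  have "Ms n \<in> {- K..H}" for n using K[OF super] Ms_le by simp
  with norm trunc show ?thesis by (rule that)
qed

lemma Fstar_spectral_value:
  obtains mu Y where "tvec Y" "Y \<noteq> tzero" "\<And>i. ereal mu + Y i \<le> Fstar Y i"
    and "\<And>s. mu < s \<Longrightarrow> \<exists>x. \<forall>j. ereal (x j - s) < F (\<lambda>j. ereal (x j)) j"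
proof -
  obtain ys Ms a b where norm: "\<And>n. Max (range (ys n)) = 0"
    and trunc: "\<And>n i. max (Fstar_real (ys n) i) (- real n) = Ms n + ys n i"
    and Ms_bounds: "\<And>n. Ms n \<in> {a..b}"
    by (rule truncated_Fstar_eigenvector_sequence) blast
  obtain r Y mu where r: "strict_mono r" and Ms: "(\<lambda>n. Ms (r n)) \<longlonglongrightarrow> mu"
    and Y: "\<And>i. (\<lambda>n. ereal (ys (r n) i)) \<longlonglongrightarrow> Y i"
    by (rule convergent_subsequence_ereal_fun_real[where Ms=Ms and ys=ys, OF Ms_bounds]) blast
  have Y_fin: "tvec Y" and "Y \<noteq> tzero"
    using norm Y by (rule tvec_nonzero_of_normalized_limit)+
  have "filterlim (\<lambda>n. real (r n)) at_top sequentially"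
    by (rule filterlim_compose[OF filterlim_real_sequentially filterlim_subseq[OF r]])
  then have "filterlim (\<lambda>n. - real (r n)) at_bot sequentially"
    by (simp add: filterlim_uminus_at_top)
  then have "ereal mu + Y i \<le> Fstar Y i" for i
    by (rule Fstar_sub_eigenvector_of_limit[of "\<lambda>n. ys (r n)" "\<lambda>n. - real (r n)", OF trunc _ Ms Y Y_fin])
  moreover have "\<exists>x. \<forall>j. ereal (x j - s) < F (\<lambda>j. ereal (x j)) j" if s: "mu < s" for s
  proof -
    obtain N where "\<forall>n\<ge>N. Ms (r n) < s"
      using order_tendstoD(2)[OF Ms s] unfolding eventually_sequentially by blast
    then have "Ms (r N) < s" by simp
    let ?x = "\<lambda>j. - AT_real (ys (r N)) j"
    have "Fstar_real (ys (r N)) i \<le> Ms (r N) + ys (r N) i" for i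
      using trunc[of "r N" i] by linarith
    then have sub: "ereal (?x j - Ms (r N)) \<le> F (\<lambda>j. ereal (?x j)) j" for j
      by (rule F_sub_eigen_of_Fstar_super_eigen)
    have "\<forall>j. ereal (?x j - s) < F (\<lambda>j. ereal (?x j)) j"
      using less_le_trans[OF _ sub] \<open>Ms (r N) < s\<close> by simp
    then show ?thesis by (rule exI[of _ ?x])
  qed
  ultimately show ?thesis by (rule that[OF Y_fin \<open>Y \<noteq> tzero\<close>])
qed

lemma feasibility_thresholds:
  obtains mu where "\<And>t. feasPR (shiftmap (\<lambda>_. t) F) \<longleftrightarrow> mu < t"
    and "\<And>t. feasP (shiftmap (\<lambda>_. t) Fstar) \<longleftrightarrow> - mu \<le> t"
proof -
  obtain mu Y where Y: "tvec Y" "Y \<noteq> tzero" "\<And>i. ereal mu + Y i \<le> Fstar Y i"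
    and F_feas: "\<And>s. mu < s \<Longrightarrow> \<exists>x. \<forall>j. ereal (x j - s) < F (\<lambda>j. ereal (x j)) j"
    by (rule Fstar_spectral_value) blast
  have "feasPR (shiftmap (\<lambda>_. t) F) \<longleftrightarrow> mu < t" for t
  proof
    assume "feasPR (shiftmap (\<lambda>_. t) F)"
    then obtain x where "\<And>j. ereal (x j - t) < F (\<lambda>j. ereal (x j)) j"
      unfolding feasPR_shiftmap_const_iff by blast
    then show "mu < t" using Y by (rule weak_duality)
  qed (simp add: feasPR_shiftmap_const_iff F_feas)
  moreover have "feasP (shiftmap (\<lambda>_. t) Fstar) \<longleftrightarrow> - mu \<le> t" for t
  proof
    assume "feasP (shiftmap (\<lambda>_. t) Fstar)"
    then obtain y where y: "tvec y" "y \<noteq> tzero" "\<And>i. ereal (- t) + y i \<le> Fstar y i"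
      unfolding feasP_shiftmap_const_iff by blast
    have "- t \<le> s" if s: "mu < s" for s
    proof -
      obtain x where "\<And>j. ereal (x j - s) < F (\<lambda>j. ereal (x j)) j" using F_feas[OF s] by blast
      then have "- t < s" using y by (rule weak_duality)
      then show ?thesis by simp
    qed
    then have "- t \<le> mu" by (rule dense_ge)
    then show "- mu \<le> t" by simp
  next
    assume "- mu \<le> t"
    then have "ereal (- t) + Y i \<le> ereal mu + Y i" for i by (intro add_right_mono) simp
    then have "ereal (- t) + Y i \<le> Fstar Y i" for i using Y(3) order_trans by blast
    with Y(1,2) show "feasP (shiftmap (\<lambda>_. t) Fstar)"
      unfolding feasP_shiftmap_const_iff by blast
  qed
  ultimately show ?thesis by (rule that)
qed

end

theorem mainTheorem3:
  fixes A :: "'m::finite \<Rightarrow> 'n::finite \<Rightarrow> ereal"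
    and B :: "'m \<Rightarrow> 'q::finite \<Rightarrow> ereal"
    and P :: "'q \<Rightarrow> 'n \<Rightarrow> real"
  assumes A_T: "\<forall>i j. A i j \<noteq> \<infinity>"
    and B_T: "\<forall>i k. B i k \<noteq> \<infinity>"
    and P_stoch: "row_stochastic P"
    and B_rows: "\<forall>i. \<exists>k. B i k \<noteq> -\<infinity>"
    and A_cols: "\<forall>j. \<exists>i. A i j \<noteq> -\<infinity>"
    and A_rows: "\<forall>i. \<exists>j. A i j \<noteq> -\<infinity>"
  shows "condPR (opF A B P) = condP (opFstar A B P)
         \<and> (feasP (opFstar A B P) \<or> feasPR (opF A B P))
         \<and> \<not> (feasPR (opF A B P) \<and> feasPR (opFstar A B P))"
proof -
  interpret tropical_operator_pair A B P
    using A_T B_T P_stoch B_rows A_cols by unfold_locales auto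
  obtain mu where F: "\<And>t. feasPR (shiftmap (\<lambda>_. t) F) \<longleftrightarrow> mu < t"
    and Fstar: "\<And>t. feasP (shiftmap (\<lambda>_. t) Fstar) \<longleftrightarrow> - mu \<le> t"
    by (rule feasibility_thresholds) blast
  have "condPR F = inverse (ereal \<bar>mu\<bar>)"
    unfolding condPR_def
    by (intro shift_threshold.cond_gen_eq shift_threshold.intro) (use feasPR_shiftmap_mono F in auto)
  moreover have "condP Fstar = inverse (ereal \<bar>- mu\<bar>)"
    unfolding condP_def
    by (intro shift_threshold.cond_gen_eq shift_threshold.intro) (use feasP_shiftmap_mono Fstar in auto)
  moreover have "feasPR F \<longleftrightarrow> mu < 0" and "feasP Fstar \<longleftrightarrow> 0 \<le> mu"
    using F[of 0] Fstar[of 0] by (simp_all add: shiftmap_zero)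
  ultimately show ?thesis using feasPR_imp_feasP[of Fstar] by auto
qed

end
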